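(* Let $\mathbb{F}$ be a field and $f(z)=\sum_{m\ge0}c_mz^m\in\mathbb{F}[[z]]$. Suppose there exist integers $\ell>k\ge1$ such that $H_\ell(f)H_k(f)\neq0$. Then the Padé approximant $[k-1/k]_f(z)$ exists, and there exist a nonzero element $h_k\in\mathbb{F}$ and an integer $k'$ with $k\le k'<\ell$ such that $$f(z)-[k-1/k]_f(z)=h_kz^{k+k'}+\mathcal{O}(z^{k+k'+1}).$$
   Context: For $n\ge1$, the Hankel determinant of $f$ is $H_n(f)=\det(c_{i+j})_{0\le i,j\le n-1}\in\mathbb{F}$, and $H_0(f)=1$. For nonnegative integers $p,q$, the Padé approximant $[p/q]_f(z)$ is the rational fraction $P(z)/Q(z)$ with $P,Q\in\mathbb{F}[z]$, $\deg P\le p$, $\deg Q\le q$, and $f(z)-P(z)/Q(z)=\mathcal{O}(z^{p+q+1})$ in $\mathbb{F}[[z]]$ (the fraction, when it exists, is unique). *)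

theory Defs
  imports "HOL-Computational_Algebra.Polynomial_FPS" "Jordan_Normal_Form.Determinant"
begin

definition hankel_det :: "nat \<Rightarrow> 'a::field fps \<Rightarrow> 'a" where
  "hankel_det n f = det (mat n n (\<lambda>(i, j). fps_nth f (i + j)))"

text \<open>R is the power series expansion of the Pade approximant [p/q]_f:
  R = P/Q with deg P <= p, deg Q <= q, P/Q a power series (Q(0) <> 0, w.l.o.g. after
  cancelling common factors), and f - P/Q = O(z^(p+q+1)).\<close>
definition is_pade :: "nat \<Rightarrow> nat \<Rightarrow> 'a::field fps \<Rightarrow> 'a fps \<Rightarrow> bool" where
  "is_pade p q f R \<longleftrightarrow>
     (\<exists>P Q. degree P \<le> p \<and> degree Q \<le> q \<and> poly Q 0 \<noteq> 0 \<and>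
            R = fps_of_poly P / fps_of_poly Q \<and>
            (\<forall>m \<le> p + q. fps_nth (f - R) m = 0))"

end

theory Submission
  imports Defs
begin

text \<open>
  Write a Pade approximant of type [k-1/k] as P/Q. The conditions on P and Q say exactly that
  the reversed coefficient vector of Q is annihilated by the k x k Hankel matrix of f; this system
  is solvable when H_k(f) \<noteq> 0, which gives existence. Conversely, if the error f - P/Q vanished
  to order k + l, the same vector (padded with zeros, nonzero because Q(0) \<noteq> 0) would lie in the
  kernel of the l x l Hankel matrix, contradicting H_l(f) \<noteq> 0. So the error has order in
  [2k, k + l).
\<close>

definition hankel_mat :: "nat \<Rightarrow> 'a::field fps \<Rightarrow> 'a mat" where
  "hankel_mat n f = mat n n (\<lambda>(i, j). fps_nth f (i + j))"

lemma hankel_mat_carrier [simp]: "hankel_mat n f \<in> carrier_mat n n"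
  by (simp add: hankel_mat_def)

lemma hankel_det_conv_hankel_mat: "hankel_det n f = det (hankel_mat n f)"
  by (simp add: hankel_det_def hankel_mat_def)

lemma fps_mult_nth_eq_0_below:
  fixes f g :: "'a::comm_semiring_0 fps"
  assumes "\<forall>i<N. fps_nth f i = 0" and "n < N"
  shows "fps_nth (f * g) n = 0"
  using assms by (auto simp: fps_mult_nth intro!: sum.neutral)

lemma fps_nth_poly_mult_shift:
  fixes Q :: "'a::comm_semiring_0 poly" and f :: "'a fps"
  assumes "degree Q \<le> k"
  shows "fps_nth (fps_of_poly Q * f) (i + k) = (\<Sum>t=0..k. fps_nth f (i + t) * coeff Q (k - t))"
proof -
  have "fps_nth (fps_of_poly Q * f) (i + k) = (\<Sum>j=0..i+k. coeff Q j * fps_nth f (i + k - j))"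
    by (simp add: fps_mult_nth)
  also have "\<dots> = (\<Sum>j=0..k. coeff Q j * fps_nth f (i + k - j))"
    by (rule sum.mono_neutral_right) (use assms in \<open>auto simp: coeff_eq_0\<close>)
  also have "\<dots> = (\<Sum>t=0..k. coeff Q (k - t) * fps_nth f (i + k - (k - t)))"
    by (subst sum.atLeastAtMost_rev) simp
  also have "\<dots> = (\<Sum>t=0..k. fps_nth f (i + t) * coeff Q (k - t))"
    by (rule sum.cong) (auto simp: mult.commute)
  finally show ?thesis .
qed

lemma mult_mat_vec_solvable:
  fixes A :: "'a::field mat"
  assumes A: "A \<in> carrier_mat n n" and "det A \<noteq> 0" and b: "b \<in> carrier_vec n"
  obtains x where "x \<in> carrier_vec n" and "A *\<^sub>v x = b"
proof -
  from det_non_zero_imp_unit[OF A \<open>det A \<noteq> 0\<close>, of "()"]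
  obtain B where B: "B \<in> carrier_mat n n" and AB: "A * B = 1\<^sub>m n"
    by (auto simp: Units_def ring_mat_def)
  have "A *\<^sub>v (B *\<^sub>v b) = b"
    using assoc_mult_mat_vec[OF A B b, symmetric] AB b by simp
  with B b show ?thesis by (intro that[of "B *\<^sub>v b"]) auto
qed

lemma hankel_annihilating_poly_exists:
  fixes f :: "'a::field fps"
  assumes "hankel_det k f \<noteq> 0"
  obtains Q where "degree Q \<le> k" and "coeff Q 0 = 1"
    and "\<And>i. i < k \<Longrightarrow> fps_nth (fps_of_poly Q * f) (i + k) = 0"
proof -
  have "det (hankel_mat k f) \<noteq> 0"
    using assms by (simp add: hankel_det_conv_hankel_mat)
  then obtain x where x: "x \<in> carrier_vec k"
    and sol: "hankel_mat k f *\<^sub>v x = vec k (\<lambda>i. - fps_nth f (i + k))"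
    using mult_mat_vec_solvable[OF hankel_mat_carrier _ vec_carrier] by blast
  have sol_row: "(\<Sum>t<k. fps_nth f (i + t) * x $ t) = - fps_nth f (i + k)" if "i < k" for i
    using arg_cong[OF sol, of "\<lambda>v. v $ i"] that x
    by (simp add: hankel_mat_def scalar_prod_def row_def atLeast0LessThan)
  define Q where "Q = Poly (map (\<lambda>n. if n = 0 then 1 else x $ (k - n)) [0..<Suc k])"
  have coeff_Q: "coeff Q n = (if n = 0 then 1 else if n \<le> k then x $ (k - n) else 0)" for n
    by (simp add: Q_def nth_default_def del: upt_Suc)
  have deg_Q: "degree Q \<le> k"
    by (rule degree_le) (auto simp: coeff_Q)
  have "fps_nth (fps_of_poly Q * f) (i + k) = 0" if "i < k" for i
  proof -
    have "fps_nth (fps_of_poly Q * f) (i + k) = (\<Sum>t<Suc k. fps_nth f (i + t) * coeff Q (k - t))"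
      by (simp add: fps_nth_poly_mult_shift[OF deg_Q] atLeast0AtMost lessThan_Suc_atMost)
    also have "\<dots> = (\<Sum>t<k. fps_nth f (i + t) * x $ t) + fps_nth f (i + k)"
      by (simp add: coeff_Q)
    finally show ?thesis using sol_row[OF that] by simp
  qed
  with deg_Q show ?thesis by (intro that[of Q]) (auto simp: coeff_Q)
qed

lemma hankel_det_eq_0_if_annihilated:
  fixes f :: "'a::field fps"
  assumes "k < n" and deg_Q: "degree Q \<le> k" and "coeff Q 0 \<noteq> 0"
    and annihilated: "\<And>i. i < n \<Longrightarrow> fps_nth (fps_of_poly Q * f) (i + k) = 0"
  shows "hankel_det n f = 0"
proof -
  define v where "v = vec n (\<lambda>t. if t \<le> k then coeff Q (k - t) else 0)"
  have v: "v \<in> carrier_vec n" by (simp add: v_def)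
  have "v $ k \<noteq> 0" using assms by (simp add: v_def)
  hence "v \<noteq> 0\<^sub>v n" using \<open>k < n\<close> by auto
  moreover have "hankel_mat n f *\<^sub>v v = 0\<^sub>v n"
  proof (rule eq_vecI)
    fix i assume "i < dim_vec (0\<^sub>v n :: 'a vec)"
    hence i: "i < n" by simp
    have "(hankel_mat n f *\<^sub>v v) $ i = (\<Sum>t\<in>{0..<n}. fps_nth f (i + t) * v $ t)"
      using i by (simp add: hankel_mat_def scalar_prod_def row_def v_def)
    also have "\<dots> = (\<Sum>t=0..k. fps_nth f (i + t) * coeff Q (k - t))"
      using \<open>k < n\<close> by (intro sum.mono_neutral_cong_right) (auto simp: v_def)
    also have "\<dots> = 0"
      using annihilated[OF i] by (simp add: fps_nth_poly_mult_shift[OF deg_Q])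
    finally show "(hankel_mat n f *\<^sub>v v) $ i = 0\<^sub>v n $ i" using i by simp
  qed (simp add: hankel_mat_def)
  ultimately show ?thesis
    using v det_0_iff_vec_prod_zero[OF hankel_mat_carrier] by (auto simp: hankel_det_conv_hankel_mat)
qed

lemma is_pade_of_denominator:
  fixes f :: "'a::field fps" and Q :: "'a poly"
  assumes deg_Q: "degree Q \<le> q" and Q0: "coeff Q 0 \<noteq> 0"
    and gap: "\<And>m. p < m \<Longrightarrow> m \<le> p + q \<Longrightarrow> fps_nth (fps_of_poly Q * f) m = 0"
  shows "is_pade p q f (fps_of_poly (truncate_fps (Suc p) (fps_of_poly Q * f)) / fps_of_poly Q)"
proof -
  define P where "P = truncate_fps (Suc p) (fps_of_poly Q * f)"
  define E where "E = fps_of_poly Q * f - fps_of_poly P"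
  have Q_unit: "fps_of_poly Q * inverse (fps_of_poly Q) = 1"
    using Q0 by (simp add: inverse_mult_eq_1')
  have "E * inverse (fps_of_poly Q)
          = f * (fps_of_poly Q * inverse (fps_of_poly Q)) - fps_of_poly P * inverse (fps_of_poly Q)"
    by (simp add: E_def algebra_simps)
  hence error: "f - fps_of_poly P / fps_of_poly Q = E * inverse (fps_of_poly Q)"
    using Q0 Q_unit by (simp add: fps_divide_unit)
  have "\<forall>m<Suc (p + q). fps_nth E m = 0"
    using gap by (auto simp: E_def P_def)
  hence "\<forall>m \<le> p + q. fps_nth (f - fps_of_poly P / fps_of_poly Q) m = 0"
    unfolding error by (auto intro: fps_mult_nth_eq_0_below)
  moreover have "degree P \<le> p"
    using degree_truncate_fps[of "Suc p" "fps_of_poly Q * f"] by (simp add: P_def)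
  ultimately show ?thesis
    using deg_Q Q0 unfolding is_pade_def P_def[symmetric]
    by (intro exI[of _ P] exI[of _ Q]) (simp add: poly_0_coeff_0)
qed

lemma pade_exists:
  fixes f :: "'a::field fps"
  assumes "hankel_det k f \<noteq> 0"
  shows "\<exists>R. is_pade (k - 1) k f R"
proof -
  obtain Q where deg_Q: "degree Q \<le> k" and Q0: "coeff Q 0 = 1"
    and annihilated: "\<And>i. i < k \<Longrightarrow> fps_nth (fps_of_poly Q * f) (i + k) = 0"
    using hankel_annihilating_poly_exists[OF assms] by blast
  have "fps_nth (fps_of_poly Q * f) m = 0" if "k - 1 < m" "m \<le> k - 1 + k" for m
    using annihilated[of "m - k"] that by (simp add: le_add_diff_inverse2)
  with deg_Q Q0 have "is_pade (k - 1) k f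
      (fps_of_poly (truncate_fps (Suc (k - 1)) (fps_of_poly Q * f)) / fps_of_poly Q)"
    by (intro is_pade_of_denominator) auto
  then show ?thesis ..
qed

lemma pade_error_nonzero_below:
  fixes f :: "'a::field fps"
  assumes R: "is_pade (k - 1) k f R" and "1 \<le> k" and "k < l" and "hankel_det l f \<noteq> 0"
  shows "\<exists>m < k + l. fps_nth (f - R) m \<noteq> 0"
proof (rule ccontr)
  assume "\<not> ?thesis"
  hence error_vanishes: "\<forall>m < k + l. fps_nth (f - R) m = 0" by simp
  obtain P Q where deg_P: "degree P \<le> k - 1" and deg_Q: "degree Q \<le> k" and Q0: "poly Q 0 \<noteq> 0"
    and R_eq: "R = fps_of_poly P / fps_of_poly Q"
    using R unfolding is_pade_def by blast
  have "inverse (fps_of_poly Q) * fps_of_poly Q = 1"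
    using Q0 by (simp add: poly_0_coeff_0 inverse_mult_eq_1)
  moreover have "R = fps_of_poly P * inverse (fps_of_poly Q)"
    using Q0 by (simp add: R_eq poly_0_coeff_0 fps_divide_unit)
  ultimately have error_times_Q: "(f - R) * fps_of_poly Q = fps_of_poly Q * f - fps_of_poly P"
    by (simp add: algebra_simps flip: mult.assoc)
  have "fps_nth (fps_of_poly Q * f) (i + k) = 0" if "i < l" for i
  proof -
    have "coeff P (i + k) = 0"
      using deg_P \<open>1 \<le> k\<close> by (intro coeff_eq_0) simp
    moreover have "fps_nth ((f - R) * fps_of_poly Q) (i + k) = 0"
      using error_vanishes that by (intro fps_mult_nth_eq_0_below) auto
    ultimately show ?thesis by (simp add: error_times_Q)
  qed
  hence "hankel_det l f = 0"
    using \<open>k < l\<close> deg_Q Q0 by (intro hankel_det_eq_0_if_annihilated) (auto simp: poly_0_coeff_0)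
  with \<open>hankel_det l f \<noteq> 0\<close> show False by contradiction
qed

theorem theorem3p1:
  fixes f :: "'a::field fps" and k l :: nat
  assumes "1 \<le> k" and "k < l"
    and "hankel_det l f * hankel_det k f \<noteq> 0"
  shows "(\<exists>R. is_pade (k - 1) k f R) \<and>
         (\<forall>R. is_pade (k - 1) k f R \<longrightarrow>
            (\<exists>h k'. h \<noteq> 0 \<and> k \<le> k' \<and> k' < l \<and>
               (\<forall>m < k + k'. fps_nth (f - R) m = 0) \<and>
               fps_nth (f - R) (k + k') = h))"
proof (intro conjI allI impI)
  show "\<exists>R. is_pade (k - 1) k f R"
    using assms(3) by (intro pade_exists) simp
next
  fix R assume R: "is_pade (k - 1) k f R"
  define s where "s = subdegree (f - R)"
  obtain m where "m < k + l" and m: "fps_nth (f - R) m \<noteq> 0"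
    using pade_error_nonzero_below[OF R assms(1,2)] assms(3) by auto
  have "f - R \<noteq> 0" using m by auto
  have "s < k + l"
    using subdegree_leI[OF m] \<open>m < k + l\<close> by (simp add: s_def)
  moreover have "2 * k \<le> s"
    unfolding s_def using R \<open>f - R \<noteq> 0\<close> \<open>1 \<le> k\<close>
    by (intro subdegree_geI) (auto simp: is_pade_def)
  moreover have "fps_nth (f - R) s \<noteq> 0"
    unfolding s_def using \<open>f - R \<noteq> 0\<close> by (rule nth_subdegree_nonzero)
  ultimately show "\<exists>h k'. h \<noteq> 0 \<and> k \<le> k' \<and> k' < l \<and>
                     (\<forall>m < k + k'. fps_nth (f - R) m = 0) \<and> fps_nth (f - R) (k + k') = h"
    by (intro exI[of _ "fps_nth (f - R) s"] exI[of _ "s - k"]) (auto simp: s_def)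
qed

end
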